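(* For all $a, b \in \mathbb{N}$, $R_\mathrm{ord}(K_a, S_b^\mathrm{sc}) = 1 + (a-1)(b-1)$.
   Context: All graphs are finite, simple and undirected, and a graph of order $n$ has vertex set $\{0,1,\ldots,n-1\}$; $K_n$ is the complete graph on $\{0,\ldots,n-1\}$. A $2$-edge-coloring of $K_n$ assigns each edge a color in $\{1,2\}$. For a graph $H$ and such a coloring, an embedding of $H$ in color $j$ is an injective map $\varphi\colon V(H)\to V(K_n)$ such that for every edge $uv$ of $H$ the edge $\{\varphi(u),\varphi(v)\}$ has color $j$; it is increasing if $\varphi(0)<\cdots<\varphi(|H|-1)$. The ordered Ramsey number $R_\mathrm{ord}(H_1,H_2)$ is the smallest $n$ such that every $2$-edge-coloring of $K_n$ admits an increasing embedding of $H_1$ in color $1$ or an increasing embedding of $H_2$ in color $2$. The start-central star $S_n^\mathrm{sc}$ is the graph of order $n$ whose edges are exactly $\{0,v\}$ for $1\le v\le n-1$. *)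

theory Defs
  imports Main
begin

text \<open>A graph of order n is given by its order n together with an edge set
  E :: nat set set of 2-element subsets of {0..<n}. A 2-edge-coloring of K_n
  is a function c from edges (2-element sets) to colors, with c e \<in> {1,2}
  for every edge e of K_n (values on non-edges are irrelevant).\<close>

definition complete_graph :: "nat \<Rightarrow> nat set set" where
  "complete_graph n = {e. \<exists>u v. u < n \<and> v < n \<and> u \<noteq> v \<and> e = {u, v}}"

definition star_sc :: "nat \<Rightarrow> nat set set" where
  "star_sc n = {e. \<exists>v. 1 \<le> v \<and> v < n \<and> e = {0, v}}"

definition two_coloring :: "nat \<Rightarrow> (nat set \<Rightarrow> nat) \<Rightarrow> bool" where
  "two_coloring n c \<longleftrightarrow> (\<forall>e \<in> complete_graph n. c e \<in> {1, 2})"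

definition inc_embedding ::
  "nat \<Rightarrow> nat set set \<Rightarrow> nat \<Rightarrow> (nat set \<Rightarrow> nat) \<Rightarrow> nat \<Rightarrow> (nat \<Rightarrow> nat) \<Rightarrow> bool" where
  "inc_embedding k E n c j \<phi> \<longleftrightarrow>
     inj_on \<phi> {0..<k} \<and> (\<forall>i<k. \<phi> i < n) \<and> strict_mono_on {0..<k} \<phi> \<and>
     (\<forall>e \<in> E. c (\<phi> ` e) = j)"

definition ord_arrows :: "nat \<Rightarrow> nat \<Rightarrow> nat set set \<Rightarrow> nat \<Rightarrow> nat set set \<Rightarrow> bool" where
  "ord_arrows n k1 E1 k2 E2 \<longleftrightarrow>
     (\<forall>c. two_coloring n c \<longrightarrow>
        (\<exists>\<phi>. inc_embedding k1 E1 n c 1 \<phi>) \<or> (\<exists>\<phi>. inc_embedding k2 E2 n c 2 \<phi>))"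

definition R_ord :: "nat \<Rightarrow> nat set set \<Rightarrow> nat \<Rightarrow> nat set set \<Rightarrow> nat" where
  "R_ord k1 E1 k2 E2 = (LEAST n. ord_arrows n k1 E1 k2 E2)"

end

theory Submission
  imports Defs
begin

text \<open>Upper bound: if some vertex v has at least b - 1 later neighbours in colour 2, these
  together with v form a colour-2 copy of the start-central star. Otherwise greedily take the
  least remaining vertex v and keep only its later colour-1 neighbours; each round costs at most
  b - 1 vertices, so from 1 + (a - 1)(b - 1) vertices we collect a colour-1 clique on a
  vertices. Lower bound: cut {0..<(a - 1)(b - 1)} into a - 1 consecutive blocks of b - 1
  vertices and colour an edge 2 iff it lies inside a block; a colour-1 clique meets every block
  at most once, and a colour-2 star lies inside one block.\<close>

definition later_nbrs :: "nat \<Rightarrow> (nat set \<Rightarrow> nat) \<Rightarrow> nat \<Rightarrow> nat \<Rightarrow> nat set" where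
  "later_nbrs n c j v = {w. v < w \<and> w < n \<and> c {v, w} = j}"

lemma mem_later_nbrs [simp]: "w \<in> later_nbrs n c j v \<longleftrightarrow> v < w \<and> w < n \<and> c {v, w} = j"
  unfolding later_nbrs_def by simp

lemma finite_later_nbrs [simp]: "finite (later_nbrs n c j v)"
  unfolding later_nbrs_def by simp

lemma doubleton_mem_complete_graph:
  assumes "u < n" and "v < n" and "u \<noteq> v"
  shows "{u, v} \<in> complete_graph n"
  using assms unfolding complete_graph_def by blast

lemma mem_complete_graphE:
  assumes "e \<in> complete_graph n"
  obtains x y where "x < y" and "y < n" and "e = {x, y}"
proof -
  from assms obtain u v where uv: "u < n" "v < n" "u \<noteq> v" "e = {u, v}"
    unfolding complete_graph_def by blast
  show thesis
  proof (cases "u < v")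
    case True
    then show thesis using that uv by blast
  next
    case False
    then have "v < u" "e = {v, u}"
      using uv by (auto simp: insert_commute)
    then show thesis using that uv by blast
  qed
qed

lemma inc_embedding_iff:
  "inc_embedding k E n c j \<phi> \<longleftrightarrow>
     strict_mono_on {0..<k} \<phi> \<and> (\<forall>i<k. \<phi> i < n) \<and> (\<forall>e \<in> E. c (\<phi> ` e) = j)"
  unfolding inc_embedding_def using strict_mono_on_imp_inj_on by blast

lemma strict_mono_on_case_nat:
  assumes "strict_mono_on {0..<k} \<psi>" and "\<forall>i<k. v < \<psi> i"
  shows "strict_mono_on {0..<Suc k} (case_nat v \<psi>)"
proof (rule strict_mono_onI)
  fix i j assume "i \<in> {0..<Suc k}" "j \<in> {0..<Suc k}" "i < j"
  then show "case_nat v \<psi> i < case_nat v \<psi> j"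
    using assms strict_mono_onD[OF assms(1)]
    by (cases i; cases j) auto
qed

lemma finite_strict_mono_enumeration:
  fixes W :: "'a::linorder set"
  assumes "finite W" and "k \<le> card W"
  obtains \<psi> where "strict_mono_on {0..<k} \<psi>" and "\<psi> ` {0..<k} \<subseteq> W"
proof -
  let ?xs = "sorted_list_of_set W"
  have len: "length ?xs = card W"
    using assms(1) by simp
  have "(!) ?xs ` {0..<k} \<subseteq> set ?xs"
    using len assms(2) by auto
  moreover have "strict_mono_on {0..<k} ((!) ?xs)"
  proof (rule strict_mono_onI)
    fix i j assume "i \<in> {0..<k}" "j \<in> {0..<k}" "i < j"
    then show "?xs ! i < ?xs ! j"
      using sorted_wrt_nth_less[OF strict_sorted_list_of_set, of i j W] len assms(2) by simp
  qed
  ultimately show thesis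
    using that assms(1) by simp
qed

lemma inc_embedding_case_nat:
  assumes "strict_mono_on {0..<k} \<psi>" and "\<psi> ` {0..<k} \<subseteq> later_nbrs n c j v" and "v < n"
    and "\<forall>e \<in> E. c (case_nat v \<psi> ` e) = j"
  shows "inc_embedding (Suc k) E n c j (case_nat v \<psi>)"
proof -
  have later: "v < \<psi> i" "\<psi> i < n" if "i < k" for i
    using assms(2) that by (auto simp: image_subset_iff)
  have "strict_mono_on {0..<Suc k} (case_nat v \<psi>)"
    using assms(1) later(1) by (intro strict_mono_on_case_nat) auto
  moreover have "case_nat v \<psi> i < n" if "i < Suc k" for i
    using that later(2) assms(3) by (cases i) auto
  ultimately show ?thesis
    using assms(4) unfolding inc_embedding_iff by blast
qed

lemma inc_embedding_star_sc_case_nat: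
  assumes "strict_mono_on {0..<k} \<psi>" and "\<psi> ` {0..<k} \<subseteq> later_nbrs n c j v" and "v < n"
  shows "inc_embedding (Suc k) (star_sc (Suc k)) n c j (case_nat v \<psi>)"
proof (rule inc_embedding_case_nat[OF assms], rule ballI)
  fix e assume "e \<in> star_sc (Suc k)"
  then obtain w where "1 \<le> w" "w < Suc k" "e = {0, w}"
    unfolding star_sc_def by blast
  then obtain i where "i < k" "e = {0, Suc i}"
    by (cases w) auto
  then show "c (case_nat v \<psi> ` e) = j"
    using assms(2) by (auto simp: image_subset_iff)
qed

lemma inc_embedding_complete_graph_case_nat:
  assumes "inc_embedding k (complete_graph k) n c j \<psi>"
    and "\<psi> ` {0..<k} \<subseteq> later_nbrs n c j v" and "v < n"
  shows "inc_embedding (Suc k) (complete_graph (Suc k)) n c j (case_nat v \<psi>)"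
proof -
  have mono: "strict_mono_on {0..<k} \<psi>"
    and edges: "\<And>e. e \<in> complete_graph k \<Longrightarrow> c (\<psi> ` e) = j"
    using assms(1) unfolding inc_embedding_iff by blast+
  show ?thesis
  proof (rule inc_embedding_case_nat[OF mono assms(2,3)], rule ballI)
    fix e assume "e \<in> complete_graph (Suc k)"
    then obtain x y where "x < y" "y < Suc k" "e = {x, y}"
      by (rule mem_complete_graphE)
    then obtain y' where "y = Suc y'" "y' < k"
      by (cases y) auto
    show "c (case_nat v \<psi> ` e) = j"
    proof (cases x)
      case 0
      then show ?thesis
        using assms(2) \<open>y' < k\<close> \<open>e = {x, y}\<close> \<open>y = Suc y'\<close> by (auto simp: image_subset_iff)
    next
      case (Suc x')
      then have "{x', y'} \<in> complete_graph k"
        using \<open>x < y\<close> \<open>y = Suc y'\<close> \<open>y' < k\<close> by (intro doubleton_mem_complete_graph) auto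
      then show ?thesis
        using edges[of "{x', y'}"] \<open>e = {x, y}\<close> \<open>y = Suc y'\<close> Suc by simp
    qed
  qed
qed

lemma greedy_monochromatic_clique:
  assumes coloring: "two_coloring n c"
    and sparse: "\<forall>v<n. card (later_nbrs n c 2 v) < s"
    and "C \<subseteq> {..<n}" and "1 + k * s \<le> card C"
  shows "\<exists>\<psi>. \<psi> ` {0..<Suc k} \<subseteq> C \<and> inc_embedding (Suc k) (complete_graph (Suc k)) n c 1 \<psi>"
  using assms(3,4)
proof (induction k arbitrary: C)
  case 0
  then obtain x where "x \<in> C" by fastforce
  moreover have "complete_graph (Suc 0) = {}"
    unfolding complete_graph_def by auto
  ultimately show ?case
    using "0.prems"(1) by (intro exI[of _ "\<lambda>_. x"]) (auto simp: inc_embedding_iff strict_mono_on_def)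
next
  case (Suc k)
  have "finite C" "C \<noteq> {}"
    using Suc.prems finite_subset by fastforce+
  define v where "v = Min C"
  have "v \<in> C" and v_least: "\<And>w. w \<in> C \<Longrightarrow> v \<le> w"
    using \<open>finite C\<close> \<open>C \<noteq> {}\<close> unfolding v_def by simp_all
  then have "v < n" using Suc.prems(1) by auto
  define C' where "C' = C \<inter> later_nbrs n c 1 v"
  have cover: "C - {v} \<subseteq> C' \<union> later_nbrs n c 2 v"
  proof
    fix w assume w: "w \<in> C - {v}"
    then have "v < w" "w < n"
      using v_least Suc.prems(1) by (auto simp: le_less)
    then have "{v, w} \<in> complete_graph n"
      using \<open>v < n\<close> by (intro doubleton_mem_complete_graph) auto
    then have "c {v, w} \<in> {1, 2}"
      using coloring unfolding two_coloring_def by blast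
    then show "w \<in> C' \<union> later_nbrs n c 2 v"
      using w \<open>v < w\<close> \<open>w < n\<close> unfolding C'_def by auto
  qed
  have "card C - 1 = card (C - {v})"
    using \<open>v \<in> C\<close> by simp
  also have "\<dots> \<le> card (C' \<union> later_nbrs n c 2 v)"
    using cover \<open>finite C\<close> unfolding C'_def by (intro card_mono) simp_all
  also have "\<dots> \<le> card C' + card (later_nbrs n c 2 v)"
    by (rule card_Un_le)
  finally have "card C - 1 \<le> card C' + card (later_nbrs n c 2 v)" .
  moreover have "card (later_nbrs n c 2 v) < s"
    using sparse \<open>v < n\<close> by blast
  ultimately have "1 + k * s \<le> card C'"
    using Suc.prems(2) by simp
  moreover have "C' \<subseteq> {..<n}"
    using Suc.prems(1) unfolding C'_def by blast
  ultimately obtain \<psi> where \<psi>: "\<psi> ` {0..<Suc k} \<subseteq> C'"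
    "inc_embedding (Suc k) (complete_graph (Suc k)) n c 1 \<psi>"
    using Suc.IH by blast
  have "\<psi> ` {0..<Suc k} \<subseteq> later_nbrs n c 1 v"
    using \<psi>(1) unfolding C'_def by blast
  then have "inc_embedding (Suc (Suc k)) (complete_graph (Suc (Suc k))) n c 1 (case_nat v \<psi>)"
    using \<psi>(2) \<open>v < n\<close> by (intro inc_embedding_complete_graph_case_nat)
  moreover have "case_nat v \<psi> ` {0..<Suc (Suc k)} \<subseteq> C"
    using \<psi>(1) \<open>v \<in> C\<close> unfolding C'_def by (auto simp: less_Suc_eq_0_disj image_subset_iff)
  ultimately show ?case by blast
qed

lemma ord_arrows_clique_star:
  assumes "a \<ge> 1" and "b \<ge> 1" and "1 + (a - 1) * (b - 1) \<le> n"
  shows "ord_arrows n a (complete_graph a) b (star_sc b)"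
  unfolding ord_arrows_def
proof (intro allI impI)
  fix c assume coloring: "two_coloring n c"
  show "(\<exists>\<phi>. inc_embedding a (complete_graph a) n c 1 \<phi>) \<or> (\<exists>\<phi>. inc_embedding b (star_sc b) n c 2 \<phi>)"
  proof (cases "\<exists>v<n. b - 1 \<le> card (later_nbrs n c 2 v)")
    case True
    then obtain v where "v < n" and "b - 1 \<le> card (later_nbrs n c 2 v)"
      by blast
    moreover obtain \<psi> where "strict_mono_on {0..<b - 1} \<psi>"
      and "\<psi> ` {0..<b - 1} \<subseteq> later_nbrs n c 2 v"
      using finite_strict_mono_enumeration[OF finite_later_nbrs \<open>b - 1 \<le> _\<close>] .
    ultimately have "inc_embedding (Suc (b - 1)) (star_sc (Suc (b - 1))) n c 2 (case_nat v \<psi>)"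
      by (intro inc_embedding_star_sc_case_nat)
    then have "inc_embedding b (star_sc b) n c 2 (case_nat v \<psi>)"
      using assms(2) by simp
    then show ?thesis by blast
  next
    case False
    then have "\<forall>v<n. card (later_nbrs n c 2 v) < b - 1"
      by (simp add: not_le)
    moreover have "1 + (a - 1) * (b - 1) \<le> card {..<n}"
      using assms(3) by simp
    ultimately obtain \<psi> where "inc_embedding (Suc (a - 1)) (complete_graph (Suc (a - 1))) n c 1 \<psi>"
      using greedy_monochromatic_clique[OF coloring _ order_refl] by blast
    then have "inc_embedding a (complete_graph a) n c 1 \<psi>"
      using assms(1) by simp
    then show ?thesis by blast
  qed
qed

definition block_coloring :: "nat \<Rightarrow> nat set \<Rightarrow> nat" where
  "block_coloring d e = (if \<exists>u v. e = {u, v} \<and> u div d = v div d then 2 else 1)"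

lemma block_coloring_doubleton:
  "block_coloring d {u, v} = (if u div d = v div d then 2 else 1)"
  unfolding block_coloring_def by (auto simp: doubleton_eq_iff)

lemma two_coloring_block_coloring: "two_coloring n (block_coloring d)"
  unfolding two_coloring_def block_coloring_def by simp

lemma block_coloring_clique_le:
  assumes "inc_embedding k (complete_graph k) m (block_coloring d) 1 \<phi>"
    and "m \<le> q * d" and "0 < d"
  shows "k \<le> q"
proof -
  from assms(1) have below: "\<forall>i<k. \<phi> i < m"
    and clique: "\<forall>e \<in> complete_graph k. block_coloring d (\<phi> ` e) = 1"
    unfolding inc_embedding_def by blast+
  have "inj_on (\<lambda>i. \<phi> i div d) {0..<k}"
  proof (rule inj_onI, rule ccontr)
    fix i j assume "i \<in> {0..<k}" "j \<in> {0..<k}" "\<phi> i div d = \<phi> j div d" "i \<noteq> j"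
    then have "{i, j} \<in> complete_graph k" "block_coloring d (\<phi> ` {i, j}) = 2"
      by (auto intro: doubleton_mem_complete_graph simp: block_coloring_doubleton)
    then show False using clique by fastforce
  qed
  moreover have "(\<lambda>i. \<phi> i div d) ` {0..<k} \<subseteq> {0..<q}"
    using below assms(2,3) by (auto simp: div_less_iff_less_mult)
  ultimately have "card {0..<k} \<le> card {0..<q}"
    by (intro card_inj_on_le) auto
  then show ?thesis by simp
qed

lemma block_coloring_star_le:
  assumes "inc_embedding k (star_sc k) m (block_coloring d) 2 \<phi>" and "0 < d"
  shows "k \<le> d"
proof -
  from assms(1) have "inj_on \<phi> {0..<k}"
    and star: "\<forall>e \<in> star_sc k. block_coloring d (\<phi> ` e) = 2"
    unfolding inc_embedding_def by blast+
  define B where "B = \<phi> 0 div d"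
  have same_block: "\<phi> i div d = B" if "i < k" for i
  proof (cases i)
    case (Suc i')
    then have "{0, i} \<in> star_sc k"
      using that unfolding star_sc_def by auto
    then show ?thesis
      using star unfolding B_def by (fastforce simp: block_coloring_doubleton split: if_splits)
  qed (simp add: B_def)
  have "\<phi> ` {0..<k} \<subseteq> {B * d..<d + B * d}"
  proof
    fix x assume "x \<in> \<phi> ` {0..<k}"
    then have "x div d = B"
      using same_block by auto
    then show "x \<in> {B * d..<d + B * d}"
      using div_times_less_eq_dividend[of x d] dividend_less_div_times[OF assms(2), of x] by simp
  qed
  then have "card (\<phi> ` {0..<k}) \<le> card {B * d..<d + B * d}"
    by (rule card_mono[OF finite_atLeastLessThan])
  then show ?thesis
    using card_image[OF \<open>inj_on \<phi> {0..<k}\<close>] by simp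
qed

lemma not_ord_arrows_clique_star:
  assumes "a \<ge> 1" and "b \<ge> 1" and "m < 1 + (a - 1) * (b - 1)"
  shows "\<not> ord_arrows m a (complete_graph a) b (star_sc b)"
proof
  assume "ord_arrows m a (complete_graph a) b (star_sc b)"
  then obtain \<phi> where embedding:
    "inc_embedding a (complete_graph a) m (block_coloring (b - 1)) 1 \<phi>
      \<or> inc_embedding b (star_sc b) m (block_coloring (b - 1)) 2 \<phi>"
    using two_coloring_block_coloring unfolding ord_arrows_def by blast
  then have "\<phi> 0 < m"
    using assms(1,2) unfolding inc_embedding_def by auto
  have "m \<le> (a - 1) * (b - 1)"
    using assms(3) by simp
  with \<open>\<phi> 0 < m\<close> have "0 < b - 1"
    by (cases "b - 1") auto
  from embedding show False
  proof
    assume "inc_embedding a (complete_graph a) m (block_coloring (b - 1)) 1 \<phi>"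
    then have "a \<le> a - 1"
      using block_coloring_clique_le \<open>m \<le> _\<close> \<open>0 < b - 1\<close> by blast
    then show False using assms(1) by simp
  next
    assume "inc_embedding b (star_sc b) m (block_coloring (b - 1)) 2 \<phi>"
    then have "b \<le> b - 1"
      using block_coloring_star_le \<open>0 < b - 1\<close> by blast
    then show False using assms(2) by simp
  qed
qed

theorem theorem4p24:
  fixes a b :: nat
  assumes "a \<ge> 1" and "b \<ge> 1"
  shows "R_ord a (complete_graph a) b (star_sc b) = 1 + (a - 1) * (b - 1)"
  unfolding R_ord_def
proof (rule Least_equality)
  show "ord_arrows (1 + (a - 1) * (b - 1)) a (complete_graph a) b (star_sc b)"
    using ord_arrows_clique_star[OF assms] by simp
  show "1 + (a - 1) * (b - 1) \<le> m" if "ord_arrows m a (complete_graph a) b (star_sc b)" for m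
    using not_ord_arrows_clique_star[OF assms] that not_le by blast
qed

end
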